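(* Let $n\ge 2$. The number of MAU pairs $(u,v)$ of binary words with $|u|=|v|=n$ and $\big||u|_c-|v|_c\big|\ge 2$ for all $c\in\{a,b\}$ equals $$2\sum_{r_2=0}^{n-2}\ \sum_{r_1=r_2+2}^{n}{}_{A}N_{O}^{B_{r_2}},$$ where, for each $(r_1,r_2)$, $A=(r_2-r_1,\,r_1-r_2)$, $O=(0,0)$ and $B_{r_2}=(r_2,\,n-r_2)$.
   Context: Let $\Sigma=\{a,b\}$. For a word $w$ and a letter $c$, $|w|_c$ denotes the number of occurrences of $c$ in $w$. Two words $x,y$ are abelian equivalent, written $x\sim_{\mathrm{abl}}y$, if $|x|_c=|y|_c$ for all $c\in\Sigma$. For words $u,v$: a pair $(x,y)$ is an internal abelian-border of $(u,v)$ if $x$ is a nonempty proper suffix of $u$, $y$ is a proper prefix of $v$, and $x\sim_{\mathrm{abl}}y$; it is an external abelian-border of $(u,v)$ if $x$ is a nonempty proper prefix of $u$, $y$ is a proper suffix of $v$, and $x\sim_{\mathrm{abl}}y$. The pair $(u,v)$ is mutually abelian-bordered (MAB) if it has both an internal and an external abelian-border, and mutually abelian-unbordered (MAU) if it has neither. A lattice path is a finite sequence of points of $\mathbb Z^2$ in which each consecutive difference is $(1,0)$ (an east step) or $(0,1)$ (a north step). The word $w(p)\in\Sigma^*$ of a lattice path $p$ records its steps in order, writing $a$ for an east step and $b$ for a north step; conversely, for a point $A\in\mathbb Z^2$ and a word $w$, $p_A(w)$ is the lattice path starting at $A$ whose word is $w$. For lattice paths $p,q$, $p\cap q$ denotes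 the set of lattice points lying on both. For distinct lattice points $A,B,C$, ${}_{A}\mathcal N_{B}^{C}$ is the set of triples $(p,q,p')$ where $p$ is a lattice path from $A$ to $C$, $q$ is a lattice path from $B$ to $C$, $p'=p_B(w(p))$, $p\cap q=\{C\}$ and $q\cap p'=\{B\}$; and ${}_{A}N_{B}^{C}=|{}_{A}\mathcal N_{B}^{C}|$. *)

theory Defs
  imports Main "HOL-Library.Sublist"
begin

datatype letter = La | Lb

definition abel_eq :: "letter list \<Rightarrow> letter list \<Rightarrow> bool" where
  "abel_eq x y \<longleftrightarrow> (\<forall>c. count_list x c = count_list y c)"

definition int_abel_border :: "letter list \<Rightarrow> letter list \<Rightarrow> letter list \<Rightarrow> letter list \<Rightarrow> bool" where
  "int_abel_border u v x y \<longleftrightarrow> x \<noteq> [] \<and> strict_suffix x u \<and> strict_prefix y v \<and> abel_eq x y"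

definition ext_abel_border :: "letter list \<Rightarrow> letter list \<Rightarrow> letter list \<Rightarrow> letter list \<Rightarrow> bool" where
  "ext_abel_border u v x y \<longleftrightarrow> x \<noteq> [] \<and> strict_prefix x u \<and> strict_suffix y v \<and> abel_eq x y"

definition MAU :: "letter list \<Rightarrow> letter list \<Rightarrow> bool" where
  "MAU u v \<longleftrightarrow> \<not> (\<exists>x y. int_abel_border u v x y) \<and> \<not> (\<exists>x y. ext_abel_border u v x y)"

type_synonym point = "int \<times> int"

definition lattice_path :: "point list \<Rightarrow> bool" where
  "lattice_path p \<longleftrightarrow> p \<noteq> [] \<and>
     (\<forall>i. Suc i < length p \<longrightarrow>
        p ! Suc i = (fst (p ! i) + 1, snd (p ! i)) \<or> p ! Suc i = (fst (p ! i), snd (p ! i) + 1))"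

definition word_of :: "point list \<Rightarrow> letter list" where
  "word_of p = map (\<lambda>(P, Q). if Q = (fst P + 1, snd P) then La else Lb) (zip p (tl p))"

fun step :: "point \<Rightarrow> letter \<Rightarrow> point" where
  "step (x, y) La = (x + 1, y)"
| "step (x, y) Lb = (x, y + 1)"

fun path_from :: "point \<Rightarrow> letter list \<Rightarrow> point list" where
  "path_from P [] = [P]"
| "path_from P (c # w) = P # path_from (step P c) w"

definition Ntriples :: "point \<Rightarrow> point \<Rightarrow> point \<Rightarrow> (point list \<times> point list \<times> point list) set" where
  "Ntriples A B C = {(p, q, p').
      lattice_path p \<and> hd p = A \<and> last p = C \<and>
      lattice_path q \<and> hd q = B \<and> last q = C \<and>
      p' = path_from B (word_of p) \<and>
      set p \<inter> set q = {C} \<and> set q \<inter> set p' = {B}}"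

definition Ncount :: "point \<Rightarrow> point \<Rightarrow> point \<Rightarrow> nat" where
  "Ncount A B C = card (Ntriples A B C)"

end

theory Submission
  imports Defs "HOL-Library.Product_Plus"
begin

(*
  Write parikh w for (|w|_a, |w|_b). The path p_P(w) visits the points P + parikh (take i w), the
  i-th of them on the anti-diagonal x + y = x_P + y_P + i, so two paths starting on the same
  anti-diagonal can only meet after the same number of steps.

  Let |u| = |v| = n, |u|_a = r1 and |v|_a = r2 with r1 \<noteq> r2, and A = (r2 - r1, r1 - r2). Then
  p_A(u) and p_O(rev v) both end at B = parikh v; they meet after i < n steps iff the suffixes of
  length n - i of u and of rev v are abelian equivalent, i.e. iff (u, v) has an internal
  abelian-border of length n - i. Likewise p_O(rev v) and p_O(u) meet after 0 < i \<le> n steps iff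
  (u, v) has an external abelian-border of length i. So (u, v) \<mapsto> (p_A(u), p_O(rev v), p_O(u))
  maps the MAU pairs with these letter counts bijectively onto the N-triples. Finally, for words of
  equal length the b-counts differ exactly as much as the a-counts, and swapping u and v exchanges
  the pairs with r1 \<ge> r2 + 2 and those with r2 \<ge> r1 + 2, which gives the factor 2.
*)

definition parikh :: "letter list \<Rightarrow> point" where
  "parikh w = (int (count_list w La), int (count_list w Lb))"

definition level :: "point \<Rightarrow> int" where
  "level P = fst P + snd P"

lemma length_eq_count_list: "length w = count_list w La + count_list w Lb"
proof (induction w)
  case (Cons c w)
  then show ?case
    by (cases c) simp_all
qed simp

lemma parikh_Nil [simp]: "parikh [] = 0"
  by (simp add: parikh_def zero_prod_def)

lemma parikh_append [simp]: "parikh (x @ y) = parikh x + parikh y"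
  by (simp add: parikh_def)

lemma parikh_rev [simp]: "parikh (rev w) = parikh w"
  by (simp add: parikh_def)

lemma UNIV_letter: "UNIV = {La, Lb}"
  using letter.exhaust by auto

lemma all_letter_iff: "(\<forall>c. P c) \<longleftrightarrow> P La \<and> P Lb"
  by (metis (full_types) letter.exhaust)

lemma parikh_eq_iff_abel_eq: "parikh x = parikh y \<longleftrightarrow> abel_eq x y"
  by (simp add: parikh_def abel_eq_def all_letter_iff)

lemma level_add [simp]: "level (P + Q) = level P + level Q"
  by (simp add: level_def)

lemma level_parikh [simp]: "level (parikh w) = int (length w)"
  by (simp add: level_def parikh_def length_eq_count_list)

lemma parikh_eq_imp_length_eq: "parikh x = parikh y \<Longrightarrow> length x = length y"
  by (metis level_parikh of_nat_eq_iff)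

lemma parikh_eq_Pair_iff:
  "parikh w = (int r, int n - int r) \<longleftrightarrow> length w = n \<and> count_list w La = r"
  by (auto simp: parikh_def length_eq_count_list)

lemma add_parikh_take_eq_iff:
  assumes "P + parikh u = Q + parikh w"
  shows "P + parikh (take i u) = Q + parikh (take i w) \<longleftrightarrow> parikh (drop i u) = parikh (drop i w)"
proof -
  have "P + parikh (take i u) + parikh (drop i u) = Q + parikh (take i w) + parikh (drop i w)"
    using assms by (metis add.assoc append_take_drop_id parikh_append)
  then show ?thesis
    by (metis add_left_cancel add_right_cancel)
qed

lemma step_eq_add_parikh: "step P c = P + parikh [c]"
  by (cases P; cases c) (simp_all add: parikh_def)

lemma length_path_from [simp]: "length (path_from P w) = Suc (length w)"
  by (induction w arbitrary: P) auto

lemma path_from_ne_Nil [simp]: "path_from P w \<noteq> []"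
  by (cases w) auto

lemma hd_path_from [simp]: "hd (path_from P w) = P"
  by (cases w) auto

lemma nth_path_from: "i \<le> length w \<Longrightarrow> path_from P w ! i = P + parikh (take i w)"
proof (induction w arbitrary: P i)
  case (Cons c w)
  then show ?case
    by (cases i) (simp_all add: step_eq_add_parikh add.assoc flip: parikh_append)
qed simp

lemma last_path_from: "last (path_from P w) = P + parikh w"
  using nth_path_from[of "length w" w P] by (simp add: last_conv_nth)

lemma set_path_from: "set (path_from P w) = (\<lambda>i. P + parikh (take i w)) ` {..length w}"
proof -
  have "set (path_from P w) = (!) (path_from P w) ` {..length w}"
    by (auto simp: set_conv_nth less_Suc_eq_le)
  also have "\<dots> = (\<lambda>i. P + parikh (take i w)) ` {..length w}"
    by (rule image_cong) (simp_all add: nth_path_from)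
  finally show ?thesis .
qed

lemma lattice_path_path_from: "lattice_path (path_from P w)"
  unfolding lattice_path_def
proof (intro conjI allI impI)
  show "path_from P w \<noteq> []"
    by simp
next
  fix i
  assume "Suc i < length (path_from P w)"
  then have "path_from P w ! Suc i = path_from P w ! i + parikh [w ! i]"
    by (simp add: nth_path_from take_Suc_conv_app_nth add.assoc)
  then show "path_from P w ! Suc i = (fst (path_from P w ! i) + 1, snd (path_from P w ! i)) \<or>
      path_from P w ! Suc i = (fst (path_from P w ! i), snd (path_from P w ! i) + 1)"
    by (cases "w ! i") (simp_all add: parikh_def plus_prod_def)
qed

lemma word_of_path_from [simp]: "word_of (path_from P w) = w"
proof (induction w arbitrary: P)
  case (Cons c w)
  then show ?case
    by (cases w; cases P; cases c) (simp_all add: word_of_def)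
qed (simp add: word_of_def)

lemma lattice_path_Cons_Cons:
  "lattice_path (P # Q # r) \<longleftrightarrow>
     (Q = (fst P + 1, snd P) \<or> Q = (fst P, snd P + 1)) \<and> lattice_path (Q # r)"
  unfolding lattice_path_def by (auto simp: nth_Cons split: nat.splits)

lemma path_from_word_of: "lattice_path p \<Longrightarrow> path_from (hd p) (word_of p) = p"
proof (induction p rule: induct_list012)
  case (3 P Q r)
  then have "path_from Q (word_of (Q # r)) = Q # r"
    and "Q = (fst P + 1, snd P) \<or> Q = (fst P, snd P + 1)"
    by (simp_all add: lattice_path_Cons_Cons)
  then show ?case
    by (cases P) (auto simp: word_of_def)
qed (simp_all add: lattice_path_def word_of_def)

lemma ex_int_abel_border_iff:
  "(\<exists>x y. int_abel_border u v x y) \<longleftrightarrow>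
   (\<exists>k. 0 < k \<and> k < length u \<and> k < length v \<and> parikh (drop (length u - k) u) = parikh (take k v))"
proof
  assume "\<exists>x y. int_abel_border u v x y"
  then obtain x y where x: "x \<noteq> []" "strict_suffix x u" and y: "strict_prefix y v"
    and xy: "parikh x = parikh y"
    by (auto simp: int_abel_border_def parikh_eq_iff_abel_eq)
  define k where "k = length x"
  have "length y = k"
    using parikh_eq_imp_length_eq[OF xy] by (simp add: k_def)
  have "x = drop (length u - k) u"
  proof -
    have "u = take (length u - k) u @ x"
      using x(2) unfolding k_def strict_suffix_def by (blast intro: suffix_take)
    then show ?thesis
      by (metis append_take_drop_id same_append_eq)
  qed
  moreover have "y = take k v"
    using y \<open>length y = k\<close> by (auto simp: strict_prefix_def prefix_def)
  moreover have "0 < k" "k < length u" "k < length v"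
    using x(1) suffix_length_less[OF x(2)] prefix_length_less[OF y] \<open>length y = k\<close>
    by (simp_all add: k_def)
  ultimately show "\<exists>k. 0 < k \<and> k < length u \<and> k < length v \<and>
      parikh (drop (length u - k) u) = parikh (take k v)"
    using xy by blast
next
  assume "\<exists>k. 0 < k \<and> k < length u \<and> k < length v \<and>
      parikh (drop (length u - k) u) = parikh (take k v)"
  then obtain k where k: "0 < k" "k < length u" "k < length v"
    and eq: "parikh (drop (length u - k) u) = parikh (take k v)"
    by blast
  have "length (drop (length u - k) u) = k"
    using k by simp
  then have "drop (length u - k) u \<noteq> []" "drop (length u - k) u \<noteq> u"
    using k by (auto simp del: length_drop)
  moreover have "take k v \<noteq> v"
    using k by simp
  ultimately have "int_abel_border u v (drop (length u - k) u) (take k v)"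
    using eq by (simp add: int_abel_border_def strict_suffix_def strict_prefix_def suffix_drop
        take_is_prefix parikh_eq_iff_abel_eq)
  then show "\<exists>x y. int_abel_border u v x y"
    by blast
qed

lemma int_abel_border_iff_ext_abel_border:
  "int_abel_border u v x y \<longleftrightarrow> ext_abel_border v u y x"
  unfolding int_abel_border_def ext_abel_border_def
  by (metis length_0_conv parikh_eq_iff_abel_eq parikh_eq_imp_length_eq)

lemma MAU_sym: "MAU u v \<longleftrightarrow> MAU v u"
  unfolding MAU_def by (metis int_abel_border_iff_ext_abel_border)

lemma ex_ext_abel_border_iff:
  "(\<exists>x y. ext_abel_border u v x y) \<longleftrightarrow>
   (\<exists>k. 0 < k \<and> k < length u \<and> k < length v \<and> parikh (take k u) = parikh (drop (length v - k) v))"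
proof -
  have "(\<exists>x y. ext_abel_border u v x y) \<longleftrightarrow> (\<exists>y x. int_abel_border v u y x)"
    by (metis int_abel_border_iff_ext_abel_border)
  then show ?thesis
    unfolding ex_int_abel_border_iff by (metis (no_types, opaque_lifting))
qed

lemma MAU_iff_parikh_rev:
  assumes "length u = n" "length v = n"
  shows "MAU u v \<longleftrightarrow> (\<forall>i. 0 < i \<and> i < n \<longrightarrow>
    parikh (drop i u) \<noteq> parikh (drop i (rev v)) \<and> parikh (take i u) \<noteq> parikh (take i (rev v)))"
proof -
  have "(\<exists>x y. int_abel_border u v x y) \<longleftrightarrow>
      (\<exists>i. 0 < i \<and> i < n \<and> parikh (drop i u) = parikh (drop i (rev v)))"
  proof -
    have "parikh (take k v) = parikh (drop (n - k) (rev v))" if "k < n" for k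
      using that assms by (simp add: drop_rev)
    then show ?thesis
      unfolding ex_int_abel_border_iff using assms
      by (metis diff_diff_cancel less_imp_le_nat zero_less_diff)
  qed
  moreover have "(\<exists>x y. ext_abel_border u v x y) \<longleftrightarrow>
      (\<exists>i. 0 < i \<and> i < n \<and> parikh (take i u) = parikh (take i (rev v)))"
    unfolding ex_ext_abel_border_iff using assms by (simp add: take_rev)
  ultimately show ?thesis
    unfolding MAU_def by blast
qed

lemma set_path_from_Int:
  assumes "level P = level Q"
  shows "set (path_from P u) \<inter> set (path_from Q w) =
    (\<lambda>i. P + parikh (take i u)) `
      {i. i \<le> length u \<and> i \<le> length w \<and> P + parikh (take i u) = Q + parikh (take i w)}"
    (is "_ = ?f ` ?M")
proof (intro equalityI subsetI)
  fix X
  assume "X \<in> set (path_from P u) \<inter> set (path_from Q w)"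
  then obtain i j where i: "i \<le> length u" "X = P + parikh (take i u)"
    and j: "j \<le> length w" "X = Q + parikh (take j w)"
    unfolding set_path_from by blast
  have "level P + int i = level Q + int j"
    using i j by (metis level_add level_parikh length_take min_absorb2)
  then have "i = j"
    using assms by simp
  then show "X \<in> ?f ` ?M"
    using i j by blast
next
  fix X
  assume "X \<in> ?f ` ?M"
  then obtain i where i: "i \<le> length u" "i \<le> length w"
    and Xu: "X = P + parikh (take i u)" and Xw: "X = Q + parikh (take i w)"
    by auto
  have "X \<in> set (path_from P u)" "X \<in> set (path_from Q w)"
    unfolding set_path_from using i Xu Xw by (auto intro: rev_image_eqI[of i])
  then show "X \<in> set (path_from P u) \<inter> set (path_from Q w)"
    by blast
qed

lemma path_from_Int_eq_singleton_iff:
  assumes "level P = level Q" and k: "k \<le> length u" "k \<le> length w"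
    and meet: "P + parikh (take k u) = Q + parikh (take k w)"
  shows "set (path_from P u) \<inter> set (path_from Q w) = {P + parikh (take k u)} \<longleftrightarrow>
    (\<forall>i \<le> min (length u) (length w). i \<noteq> k \<longrightarrow> P + parikh (take i u) \<noteq> Q + parikh (take i w))"
proof -
  define f where "f i = P + parikh (take i u)" for i
  define M where "M = {i. i \<le> length u \<and> i \<le> length w \<and> f i = Q + parikh (take i w)}"
  have inj: "inj_on f {..length u}"
    by (rule inj_onI) (metis f_def atMost_iff level_add level_parikh length_take min_absorb2
        add_left_cancel of_nat_eq_iff)
  have "k \<in> M"
    using k meet by (simp add: M_def f_def)
  have "f ` M = {f k} \<longleftrightarrow> M = {k}"
  proof
    assume image: "f ` M = {f k}"
    have "i = k" if "i \<in> M" for i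
    proof -
      have "f i = f k"
        using image that by blast
      moreover have "i \<in> {..length u}" "k \<in> {..length u}"
        using that \<open>k \<in> M\<close> by (simp_all add: M_def)
      ultimately show ?thesis
        using inj_onD[OF inj] by blast
    qed
    then show "M = {k}"
      using \<open>k \<in> M\<close> by blast
  qed simp
  also have "\<dots> \<longleftrightarrow> (\<forall>i \<le> min (length u) (length w). i \<noteq> k \<longrightarrow> f i \<noteq> Q + parikh (take i w))"
    using \<open>k \<in> M\<close> by (auto simp: M_def)
  finally show ?thesis
    using set_path_from_Int[OF assms(1), of u w] by (simp add: M_def f_def)
qed

lemma MAU_iff_path_from_Int:
  assumes u: "length u = n" "count_list u La = r1" and v: "length v = n" "count_list v La = r2"
    and "r1 \<noteq> r2"
  shows "MAU u v \<longleftrightarrow>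
    set (path_from (int r2 - int r1, int r1 - int r2) u) \<inter> set (path_from (0, 0) (rev v))
      = {(int r2, int n - int r2)} \<and>
    set (path_from (0, 0) (rev v)) \<inter> set (path_from (0, 0) u) = {(0, 0)}"
proof -
  define A :: point where "A = (int r2 - int r1, int r1 - int r2)"
  define w where "w = rev v"
  have w: "length w = n" "parikh w = (int r2, int n - int r2)"
    using v parikh_eq_Pair_iff[of v] by (simp_all add: w_def)
  have "parikh u = (int r1, int n - int r1)"
    using u parikh_eq_Pair_iff by simp
  then have end_u: "A + parikh u = parikh w" and "parikh u \<noteq> parikh w"
    using w \<open>r1 \<noteq> r2\<close> by (simp_all add: A_def)
  have "level A = level 0"
    by (simp add: A_def level_def)
  then have "set (path_from A u) \<inter> set (path_from 0 w) = {parikh w} \<longleftrightarrow>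
      (\<forall>i \<le> n. i \<noteq> n \<longrightarrow> A + parikh (take i u) \<noteq> 0 + parikh (take i w))"
    using path_from_Int_eq_singleton_iff[of A 0 n u w] u w end_u by simp
  also have "\<dots> \<longleftrightarrow> (\<forall>i. 0 < i \<and> i < n \<longrightarrow> parikh (drop i u) \<noteq> parikh (drop i w))"
    using add_parikh_take_eq_iff[of A u 0 w] end_u \<open>parikh u \<noteq> parikh w\<close>
    by (auto simp: le_less) (metis drop0 gr0I)
  finally have internal: "set (path_from A u) \<inter> set (path_from 0 w) = {parikh w} \<longleftrightarrow>
      (\<forall>i. 0 < i \<and> i < n \<longrightarrow> parikh (drop i u) \<noteq> parikh (drop i w))" .
  have "set (path_from 0 w) \<inter> set (path_from 0 u) = {0} \<longleftrightarrow>
      (\<forall>i \<le> n. i \<noteq> 0 \<longrightarrow> parikh (take i w) \<noteq> parikh (take i u))"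
    using path_from_Int_eq_singleton_iff[of 0 0 0 w u] u w by simp
  also have "\<dots> \<longleftrightarrow> (\<forall>i. 0 < i \<and> i < n \<longrightarrow> parikh (take i u) \<noteq> parikh (take i w))"
    using \<open>parikh u \<noteq> parikh w\<close> u w by (auto simp: le_less)
  finally have external: "set (path_from 0 w) \<inter> set (path_from 0 u) = {0} \<longleftrightarrow>
      (\<forall>i. 0 < i \<and> i < n \<longrightarrow> parikh (take i u) \<noteq> parikh (take i w))" .
  show ?thesis
    unfolding MAU_iff_parikh_rev[OF u(1) v(1)] zero_prod_def[symmetric]
    using internal external w by (simp add: A_def w_def) blast
qed

definition MAU_pairs :: "nat \<Rightarrow> nat \<Rightarrow> nat \<Rightarrow> (letter list \<times> letter list) set" where
  "MAU_pairs n r1 r2 = {(u, v). length u = n \<and> length v = n \<and>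
     count_list u La = r1 \<and> count_list v La = r2 \<and> MAU u v}"

lemma Ntriples_eq_image_MAU_pairs:
  assumes "r1 \<noteq> r2"
  shows "Ntriples (int r2 - int r1, int r1 - int r2) (0, 0) (int r2, int n - int r2) =
    (\<lambda>(u, v). (path_from (int r2 - int r1, int r1 - int r2) u, path_from (0, 0) (rev v),
                path_from (0, 0) u)) ` MAU_pairs n r1 r2"
    (is "Ntriples ?A _ ?C = ?F ` _")
proof (intro equalityI subsetI)
  fix t
  assume "t \<in> Ntriples ?A (0, 0) ?C"
  then obtain p q where t: "t = (p, q, path_from (0, 0) (word_of p))"
    and p: "lattice_path p" "hd p = ?A" "last p = ?C"
    and q: "lattice_path q" "hd q = (0, 0)" "last q = ?C"
    and meets: "set p \<inter> set q = {?C}" "set q \<inter> set (path_from (0, 0) (word_of p)) = {(0, 0)}"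
    unfolding Ntriples_def by blast
  define u where "u = word_of p"
  define v where "v = rev (word_of q)"
  have p_eq: "p = path_from ?A u" and q_eq: "q = path_from (0, 0) (rev v)"
    using path_from_word_of[OF p(1)] path_from_word_of[OF q(1)] p(2) q(2)
    by (simp_all add: u_def v_def)
  have "?A + parikh u = ?C"
    using p(3) by (simp add: p_eq last_path_from)
  then have "parikh u = ?C - ?A"
    by (subst eq_diff_eq) (simp only: add.commute)
  then have u: "length u = n" "count_list u La = r1"
    using parikh_eq_Pair_iff[of u r1 n] by simp_all
  have "parikh v = ?C"
    using q(3) by (simp add: q_eq last_path_from flip: zero_prod_def)
  then have v: "length v = n" "count_list v La = r2"
    using parikh_eq_Pair_iff[of v r2 n] by simp_all
  have "MAU u v"
    using MAU_iff_path_from_Int[OF u v assms] meets by (simp add: p_eq q_eq flip: u_def)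
  then show "t \<in> ?F ` MAU_pairs n r1 r2"
    using u v
    by (auto simp: MAU_pairs_def t p_eq q_eq simp flip: u_def intro!: image_eqI[of _ _ "(u, v)"])
next
  fix t
  assume "t \<in> ?F ` MAU_pairs n r1 r2"
  then obtain u v where t: "t = ?F (u, v)" and u: "length u = n" "count_list u La = r1"
    and v: "length v = n" "count_list v La = r2" and "MAU u v"
    by (auto simp: MAU_pairs_def)
  have "parikh u = (int r1, int n - int r1)" "parikh (rev v) = ?C"
    using u v parikh_eq_Pair_iff by simp_all
  then have "last (path_from ?A u) = ?C" "last (path_from (0, 0) (rev v)) = ?C"
    by (simp_all add: last_path_from flip: zero_prod_def)
  then show "t \<in> Ntriples ?A (0, 0) ?C"
    using MAU_iff_path_from_Int[OF u v assms] \<open>MAU u v\<close>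
    by (simp add: Ntriples_def t lattice_path_path_from)
qed

lemma Ncount_eq_card_MAU_pairs:
  assumes "r1 \<noteq> r2"
  shows "Ncount (int r2 - int r1, int r1 - int r2) (0, 0) (int r2, int n - int r2) =
    card (MAU_pairs n r1 r2)"
proof -
  have "inj_on (\<lambda>(u, v). (path_from (int r2 - int r1, int r1 - int r2) u, path_from (0, 0) (rev v),
      path_from (0, 0) u)) (MAU_pairs n r1 r2)"
    by (rule inj_onI) (clarsimp, metis rev_rev_ident word_of_path_from)
  then show ?thesis
    unfolding Ncount_def Ntriples_eq_image_MAU_pairs[OF assms] by (rule card_image)
qed

lemma finite_MAU_pairs: "finite (MAU_pairs n r1 r2)"
proof -
  have "finite (UNIV :: letter set)"
    by (simp add: UNIV_letter)
  then have "finite {w :: letter list. length w = n}"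
    using finite_lists_length_eq[of UNIV n] by simp
  then have "finite ({w :: letter list. length w = n} \<times> {w :: letter list. length w = n})"
    by (intro finite_cartesian_product)
  then show ?thesis
    by (rule rev_finite_subset) (auto simp: MAU_pairs_def)
qed

lemma MAU_pairs_swap: "MAU_pairs n r2 r1 = prod.swap ` MAU_pairs n r1 r2"
  by (auto simp: MAU_pairs_def MAU_sym)

lemma card_MAU_pairs_Un_swap:
  assumes "r1 \<noteq> r2"
  shows "card (MAU_pairs n r1 r2 \<union> MAU_pairs n r2 r1) = 2 * card (MAU_pairs n r1 r2)"
proof -
  have "card (MAU_pairs n r1 r2 \<union> MAU_pairs n r2 r1) =
      card (MAU_pairs n r1 r2) + card (MAU_pairs n r2 r1)"
    using assms by (intro card_Un_disjoint finite_MAU_pairs) (auto simp: MAU_pairs_def)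
  also have "card (MAU_pairs n r2 r1) = card (MAU_pairs n r1 r2)"
    unfolding MAU_pairs_swap[of n r1 r2] by (simp add: card_image)
  finally show ?thesis
    by simp
qed

lemma MAU_pairs_Un_swap_disjoint:
  assumes "r2 < r1" "r2' < r1'" "(r1, r2) \<noteq> (r1', r2')"
  shows "(MAU_pairs n r1 r2 \<union> MAU_pairs n r2 r1) \<inter> (MAU_pairs n r1' r2' \<union> MAU_pairs n r2' r1') = {}"
  using assms by (auto simp: MAU_pairs_def)

lemma count_list_gap_iff:
  assumes "length u = length v"
  shows "(\<forall>c. m \<le> \<bar>int (count_list u c) - int (count_list v c)\<bar>) \<longleftrightarrow>
    m \<le> \<bar>int (count_list u La) - int (count_list v La)\<bar>"
proof -
  have "int (count_list u Lb) - int (count_list v Lb) = - (int (count_list u La) - int (count_list v La))"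
    using assms by (simp add: length_eq_count_list)
  then show ?thesis
    by (simp add: all_letter_iff abs_minus_commute)
qed

lemma MAU_count_gap_eq_Union:
  "{(u, v). length u = n \<and> length v = n \<and> MAU u v \<and>
      (\<forall>c. 2 \<le> \<bar>int (count_list u c) - int (count_list v c)\<bar>)} =
   (\<Union>r2\<in>{0..n - 2}. \<Union>r1\<in>{r2 + 2..n}. MAU_pairs n r1 r2 \<union> MAU_pairs n r2 r1)"
proof (intro equalityI subsetI)
  fix x
  assume "x \<in> {(u, v). length u = n \<and> length v = n \<and> MAU u v \<and>
      (\<forall>c. 2 \<le> \<bar>int (count_list u c) - int (count_list v c)\<bar>)}"
  then obtain u v where x: "x = (u, v)" and uv: "length u = n" "length v = n" "MAU u v"
    and gap: "2 \<le> \<bar>int (count_list u La) - int (count_list v La)\<bar>"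
    using count_list_gap_iff by fastforce
  have "count_list u La \<le> n" "count_list v La \<le> n"
    using uv count_le_length by metis+
  then consider "x \<in> MAU_pairs n (count_list u La) (count_list v La)"
      "count_list v La \<in> {0..n - 2}" "count_list u La \<in> {count_list v La + 2..n}"
    | "x \<in> MAU_pairs n (count_list u La) (count_list v La)"
      "count_list u La \<in> {0..n - 2}" "count_list v La \<in> {count_list u La + 2..n}"
    using gap uv by (fastforce simp: x MAU_pairs_def)
  then show "x \<in> (\<Union>r2\<in>{0..n - 2}. \<Union>r1\<in>{r2 + 2..n}. MAU_pairs n r1 r2 \<union> MAU_pairs n r2 r1)"
    by cases blast+
next
  fix x
  assume "x \<in> (\<Union>r2\<in>{0..n - 2}. \<Union>r1\<in>{r2 + 2..n}. MAU_pairs n r1 r2 \<union> MAU_pairs n r2 r1)"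
  then obtain u v where x: "x = (u, v)" and uv: "length u = n" "length v = n" "MAU u v"
    and "2 \<le> \<bar>int (count_list u La) - int (count_list v La)\<bar>"
    by (auto simp: MAU_pairs_def)
  then show "x \<in> {(u, v). length u = n \<and> length v = n \<and> MAU u v \<and>
      (\<forall>c. 2 \<le> \<bar>int (count_list u c) - int (count_list v c)\<bar>)}"
    using count_list_gap_iff[of u v 2] by simp
qed

lemma card_MAU_count_gap:
  "card {(u, v). length u = n \<and> length v = n \<and> MAU u v \<and>
      (\<forall>c. 2 \<le> \<bar>int (count_list u c) - int (count_list v c)\<bar>)} =
   2 * (\<Sum>r2 = 0..n - 2. \<Sum>r1 = r2 + 2..n. card (MAU_pairs n r1 r2))"
proof -
  define B where "B r1 r2 = MAU_pairs n r1 r2 \<union> MAU_pairs n r2 r1" for r1 r2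
  have finite_B: "finite (B r1 r2)" for r1 r2
    by (simp add: B_def finite_MAU_pairs)
  have disjoint: "B r1 r2 \<inter> B r1' r2' = {}"
    if "r2 + 2 \<le> r1" "r2' + 2 \<le> r1'" "(r1, r2) \<noteq> (r1', r2')" for r1 r2 r1' r2'
    unfolding B_def using that by (intro MAU_pairs_Un_swap_disjoint) auto
  have "card (\<Union>r1\<in>{r2 + 2..n}. B r1 r2) = (\<Sum>r1 = r2 + 2..n. card (B r1 r2))" for r2
    by (rule card_UN_disjoint) (simp_all add: finite_B disjoint)
  moreover have "card (\<Union>r2\<in>{0..n - 2}. \<Union>r1\<in>{r2 + 2..n}. B r1 r2) =
      (\<Sum>r2 = 0..n - 2. card (\<Union>r1\<in>{r2 + 2..n}. B r1 r2))"
  proof (rule card_UN_disjoint)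
    show "\<forall>r2\<in>{0..n - 2}. \<forall>r2'\<in>{0..n - 2}. r2 \<noteq> r2' \<longrightarrow>
        (\<Union>r1\<in>{r2 + 2..n}. B r1 r2) \<inter> (\<Union>r1\<in>{r2' + 2..n}. B r1 r2') = {}"
      using disjoint by fastforce
  qed (simp_all add: finite_B)
  ultimately show ?thesis
    unfolding MAU_count_gap_eq_Union by (simp add: B_def card_MAU_pairs_Un_swap sum_distrib_left)
qed

theorem mainTheorem11:
  fixes n :: nat
  assumes "n \<ge> 2"
  shows "card {(u, v). length u = n \<and> length v = n \<and> MAU u v \<and>
            (\<forall>c. \<bar>int (count_list u c) - int (count_list v c)\<bar> \<ge> 2)}
         = 2 * (\<Sum>r2 = 0..n - 2. \<Sum>r1 = r2 + 2..n.
                  Ncount (int r2 - int r1, int r1 - int r2) (0, 0) (int r2, int n - int r2))"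
  unfolding card_MAU_count_gap
  by (simp add: Ncount_eq_card_MAU_pairs)

end
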